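(* Let $\mathbb{H}$ be an $r$-uniform simple hypergraph of diameter two with maximum degree $\Delta$. Then $\lambda(\mathbb{H})\le\big((r-1)\Delta\big)^2$.
   Context: Distances in a hypergraph $\mathbb{H}=(V,E)$ are taken in its $2$-section, the graph on $V$ in which distinct vertices are adjacent iff they lie in a common edge; the diameter is the maximum distance between two vertices. The degree of a vertex is the number of edges containing it. An $L(2,1)$-colouring of $\mathbb{H}$ is a map $f:V\to\mathbb{Z}_{\ge 0}$ such that $|f(u)-f(v)|\ge 2$ whenever $u\ne v$ lie in a common edge, and $|f(u)-f(v)|\ge 1$ whenever there are edges $e_1\ni v$, $e_2\ni u$ with $(e_1\cap e_2)\setminus\{u,v\}\ne\emptyset$. Its span is $\max f-\min f$, and $\lambda(\mathbb{H})$ is the minimum span. *)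

theory Defs
  imports Main
begin

text \<open>A hypergraph is a vertex set V with an edge set E of subsets of V.
  Simple: finite, edges are subsets of V, no loops (edges have at least 2 vertices);
  multiple edges are excluded since E is a set.\<close>
definition simple_hypergraph :: "'a set \<Rightarrow> 'a set set \<Rightarrow> bool" where
  "simple_hypergraph V E \<longleftrightarrow> finite V \<and> (\<forall>e\<in>E. e \<subseteq> V \<and> card e \<ge> 2)"

definition uniform :: "nat \<Rightarrow> 'a set set \<Rightarrow> bool" where
  "uniform r E \<longleftrightarrow> (\<forall>e\<in>E. card e = r)"

definition hadj :: "'a set set \<Rightarrow> 'a \<Rightarrow> 'a \<Rightarrow> bool" where
  "hadj E u v \<longleftrightarrow> u \<noteq> v \<and> (\<exists>e\<in>E. u \<in> e \<and> v \<in> e)"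

fun walk_le :: "'a set set \<Rightarrow> nat \<Rightarrow> 'a \<Rightarrow> 'a \<Rightarrow> bool" where
  "walk_le E 0 u v \<longleftrightarrow> u = v"
| "walk_le E (Suc n) u v \<longleftrightarrow> walk_le E n u v \<or> (\<exists>w. walk_le E n u w \<and> hadj E w v)"

definition diameter_two :: "'a set \<Rightarrow> 'a set set \<Rightarrow> bool" where
  "diameter_two V E \<longleftrightarrow> (\<forall>u\<in>V. \<forall>v\<in>V. walk_le E 2 u v)
     \<and> (\<exists>u\<in>V. \<exists>v\<in>V. \<not> walk_le E 1 u v)"

definition degree :: "'a set set \<Rightarrow> 'a \<Rightarrow> nat" where
  "degree E v = card {e\<in>E. v \<in> e}"

definition max_degree :: "'a set \<Rightarrow> 'a set set \<Rightarrow> nat" where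
  "max_degree V E = Max (degree E ` V)"

definition L21_colouring :: "'a set \<Rightarrow> 'a set set \<Rightarrow> ('a \<Rightarrow> nat) \<Rightarrow> bool" where
  "L21_colouring V E f \<longleftrightarrow>
     (\<forall>u\<in>V. \<forall>v\<in>V. u \<noteq> v \<and> (\<exists>e\<in>E. u \<in> e \<and> v \<in> e) \<longrightarrow>
         \<bar>int (f u) - int (f v)\<bar> \<ge> 2)
   \<and> (\<forall>u\<in>V. \<forall>v\<in>V. u \<noteq> v \<and> (\<exists>e1\<in>E. \<exists>e2\<in>E. v \<in> e1 \<and> u \<in> e2 \<and> (e1 \<inter> e2) - {u, v} \<noteq> {}) \<longrightarrow>
         \<bar>int (f u) - int (f v)\<bar> \<ge> 1)"

definition span :: "'a set \<Rightarrow> ('a \<Rightarrow> nat) \<Rightarrow> nat" where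
  "span V f = Max (f ` V) - Min (f ` V)"

definition lambda21 :: "'a set \<Rightarrow> 'a set set \<Rightarrow> nat" where
  "lambda21 V E = (LEAST s. \<exists>f. L21_colouring V E f \<and> span V f = s)"

end

theory Submission
  imports Defs
begin

(*
  Order the vertices as x_0, ..., x_{n-1} and label x_k by k plus the number of j < k for which
  x_j x_{j+1} is an edge of the 2-section. Consecutive labels then differ by 1, or by 2 across an
  edge, and all other labels by at least 2, so this is an L(2,1)-colouring of span n - 1 + b, where
  b counts these edge steps. Choose an ordering minimising b and let D = (r - 1) Delta, which bounds
  the degree of the 2-section. If b = 0, the Moore bound n <= D^2 + 1 for diameter two finishes.
  Otherwise let x_i x_{i+1} be an edge step. Reversing a segment starting at x_{i+1} must not
  decrease b, so every other vertex is, up to a shift by one position, a neighbour of x_i or of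
  x_{i+1}; hence n <= 2D and the span is at most 2n - 3 <= 4D - 3 <= D^2 when D >= 3. For D = 2
  the only remaining case n = 4 is settled directly.
*)

fun adjacent_steps :: "('a \<Rightarrow> 'a \<Rightarrow> bool) \<Rightarrow> 'a list \<Rightarrow> nat" where
  "adjacent_steps adj (x # y # ys) = (if adj x y then 1 else 0) + adjacent_steps adj (y # ys)"
| "adjacent_steps adj _ = 0"

lemma adjacent_steps_Cons:
  "adjacent_steps adj (x # xs) = (if xs \<noteq> [] \<and> adj x (hd xs) then 1 else 0) + adjacent_steps adj xs"
  by (cases xs) auto

lemma adjacent_steps_append:
  "adjacent_steps adj (xs @ ys) = adjacent_steps adj xs + adjacent_steps adj ys +
     (if xs \<noteq> [] \<and> ys \<noteq> [] \<and> adj (last xs) (hd ys) then 1 else 0)"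
proof (induction xs)
  case (Cons x xs)
  then show ?case by (cases xs) (auto simp: adjacent_steps_Cons)
qed simp

lemma adjacent_steps_le_length: "adjacent_steps adj xs \<le> length xs - 1"
  by (induction adj xs rule: adjacent_steps.induct) auto

lemma adjacent_steps_take_Suc:
  assumes "Suc k < length xs"
  shows "adjacent_steps adj (take (Suc (Suc k)) xs) =
    adjacent_steps adj (take (Suc k) xs) + (if adj (xs ! k) (xs ! Suc k) then 1 else 0)"
proof -
  have "take (Suc (Suc k)) xs = take (Suc k) xs @ [xs ! Suc k]"
    using assms by (simp add: take_Suc_conv_app_nth)
  moreover have "last (take (Suc k) xs) = xs ! k"
    using assms by (simp add: take_Suc_conv_app_nth)
  moreover have "take (Suc k) xs \<noteq> []"
    using assms by auto
  ultimately show ?thesis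
    by (simp add: adjacent_steps_append)
qed

lemma adjacent_steps_gt_0E:
  assumes "0 < adjacent_steps adj xs"
  obtains i where "Suc i < length xs" "adj (xs ! i) (xs ! Suc i)"
  using assms
proof (induction adj xs arbitrary: thesis rule: adjacent_steps.induct)
  case (1 adj x y ys)
  show ?case
  proof (cases "adj x y")
    case True
    then show ?thesis using "1.prems"(1)[of 0] by simp
  next
    case False
    with "1.prems"(2) obtain i where "Suc i < length (y # ys)" "adj ((y # ys) ! i) ((y # ys) ! Suc i)"
      using "1.IH" by auto
    then show ?thesis using "1.prems"(1)[of "Suc i"] by simp
  qed
qed simp_all

lemma card_nth_indices:
  assumes "distinct xs"
  shows "card {k. k < length xs \<and> P (xs ! k)} = card {x \<in> set xs. P x}"
proof -
  have "{x \<in> set xs. P x} = (!) xs ` {k. k < length xs \<and> P (xs ! k)}"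
    by (auto simp: in_set_conv_nth)
  then show ?thesis
    using assms by (simp add: card_image inj_on_nth)
qed

definition optimal_ordering :: "('a \<Rightarrow> 'a \<Rightarrow> bool) \<Rightarrow> 'a set \<Rightarrow> 'a list \<Rightarrow> bool" where
  "optimal_ordering adj V xs \<longleftrightarrow>
     is_arg_min (adjacent_steps adj) (\<lambda>ys. distinct ys \<and> set ys = V) xs"

lemma optimal_orderingD:
  assumes "optimal_ordering adj V xs"
  shows "distinct xs" "set xs = V"
    and "\<And>ys. distinct ys \<Longrightarrow> set ys = V \<Longrightarrow> adjacent_steps adj xs \<le> adjacent_steps adj ys"
  using assms by (auto simp: optimal_ordering_def is_arg_min_linorder)

lemma optimal_ordering_exists:
  assumes "finite V"
  obtains xs where "optimal_ordering adj V xs"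
proof -
  obtain ys where "distinct ys \<and> set ys = V"
    using finite_distinct_list[OF assms] by blast
  then show ?thesis
    using ex_has_least_nat[of "\<lambda>ys. distinct ys \<and> set ys = V" ys "adjacent_steps adj"] that
    by (auto simp: optimal_ordering_def is_arg_min_linorder)
qed

lemma optimal_ordering_length:
  "optimal_ordering adj V xs \<Longrightarrow> length xs = card V"
  by (metis distinct_card optimal_orderingD(1,2))

context
  fixes adj :: "'a \<Rightarrow> 'a \<Rightarrow> bool"
  assumes sym: "\<And>u v. adj u v \<longleftrightarrow> adj v u"
begin

lemma adjacent_steps_rev: "adjacent_steps adj (rev xs) = adjacent_steps adj xs"
proof (induction xs)
  case (Cons x xs)
  then show ?case
    using sym by (simp add: adjacent_steps_append adjacent_steps_Cons last_rev hd_rev)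
qed simp

lemma adjacent_steps_reverse_middle_less:
  assumes "X \<noteq> []" "Y \<noteq> []" "adj (last X) (hd Y)" "\<not> adj (last X) (last Y)"
    and "Z \<noteq> [] \<Longrightarrow> \<not> adj (hd Y) (hd Z)"
  shows "adjacent_steps adj (X @ rev Y @ Z) < adjacent_steps adj (X @ Y @ Z)"
  using assms sym by (cases "Z = []") (simp_all add: adjacent_steps_append adjacent_steps_rev hd_rev last_rev)

lemma optimal_ordering_rev:
  "optimal_ordering adj V xs \<Longrightarrow> optimal_ordering adj V (rev xs)"
  by (simp add: optimal_ordering_def is_arg_min_linorder adjacent_steps_rev)

lemma optimal_ordering_step_forward:
  assumes opt: "optimal_ordering adj V xs" and ij: "i + 2 \<le> j" "j < length xs"
    and step: "adj (xs ! i) (xs ! Suc i)"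
  shows "adj (xs ! i) (xs ! j) \<or> (Suc j < length xs \<and> adj (xs ! Suc i) (xs ! Suc j))"
proof (rule ccontr)
  define X where "X = take (Suc i) xs"
  define Y where "Y = take (j - i) (drop (Suc i) xs)"
  define Z where "Z = drop (Suc j) xs"
  have "drop (j - i) (drop (Suc i) xs) = Z"
    using ij by (simp add: Z_def)
  then have xs: "xs = X @ Y @ Z"
    unfolding X_def Y_def by (metis append_take_drop_id)
  have "X \<noteq> []" "Y \<noteq> []" "last X = xs ! i" "hd Y = xs ! Suc i" "last Y = xs ! j"
    using ij unfolding X_def Y_def
    by (auto simp: take_Suc_conv_app_nth last_conv_nth hd_drop_conv_nth min_def
        intro!: arg_cong[of _ _ "(!) xs"])
  moreover have "Z \<noteq> [] \<Longrightarrow> Suc j < length xs \<and> hd Z = xs ! Suc j"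
    by (auto simp: Z_def hd_drop_conv_nth)
  moreover assume "\<not> ?thesis"
  ultimately have "adjacent_steps adj (X @ rev Y @ Z) < adjacent_steps adj (X @ Y @ Z)"
    using step by (intro adjacent_steps_reverse_middle_less) auto
  moreover have "distinct (X @ rev Y @ Z)" "set (X @ rev Y @ Z) = V"
    using optimal_orderingD(1,2)[OF opt] xs by auto
  ultimately show False
    using optimal_orderingD(3)[OF opt] xs by (metis not_le)
qed

lemma optimal_ordering_step_backward:
  assumes opt: "optimal_ordering adj V xs" and ij: "j < i" "Suc i < length xs"
    and step: "adj (xs ! i) (xs ! Suc i)"
  shows "adj (xs ! Suc i) (xs ! j) \<or> (0 < j \<and> adj (xs ! i) (xs ! (j - 1)))"
proof -
  define n where "n = length xs"
  define i' where "i' = n - 2 - i"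
  define j' where "j' = n - 1 - j"
  have rev_nths: "rev xs ! i' = xs ! Suc i" "rev xs ! Suc i' = xs ! i" "rev xs ! j' = xs ! j"
    "Suc j' < n \<Longrightarrow> rev xs ! Suc j' = xs ! (j - 1)"
    using ij by (auto simp: rev_nth i'_def j'_def n_def Suc_diff_Suc intro!: arg_cong[of _ _ "(!) xs"])
  have "i' + 2 \<le> j'" "j' < length (rev xs)" "Suc j' < n \<longleftrightarrow> 0 < j"
    using ij by (auto simp: i'_def j'_def n_def)
  moreover have "adj (rev xs ! i') (rev xs ! Suc i')"
    using rev_nths step sym by simp
  ultimately show ?thesis
    using optimal_ordering_step_forward[OF optimal_ordering_rev[OF opt]] rev_nths sym
    by (fastforce simp: n_def)
qed

lemma optimal_ordering_indices_cover:
  assumes opt: "optimal_ordering adj V xs" and i: "Suc i < length xs"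
    and step: "adj (xs ! i) (xs ! Suc i)"
  shows "{..<length xs} - {i, Suc i} \<subseteq>
    (\<lambda>k. if k < i then Suc k else k) ` ({k. k < length xs \<and> adj (xs ! i) (xs ! k)} - {Suc i}) \<union>
    (\<lambda>k. if k < i then k else k - 1) ` ({k. k < length xs \<and> adj (xs ! Suc i) (xs ! k)} - {i})"
    (is "_ \<subseteq> ?shift_a ` ?A \<union> ?shift_c ` ?C")
proof
  fix j assume j: "j \<in> {..<length xs} - {i, Suc i}"
  show "j \<in> ?shift_a ` ?A \<union> ?shift_c ` ?C"
  proof (cases "j < i")
    case True
    then consider "adj (xs ! Suc i) (xs ! j)" | "0 < j" "adj (xs ! i) (xs ! (j - 1))"
      using optimal_ordering_step_backward[OF opt _ i step] sym by blast
    then show ?thesis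
    proof cases
      case 1
      then show ?thesis using True j by (intro UnI2 rev_image_eqI[of j]) auto
    next
      case 2
      then show ?thesis using True i by (intro UnI1 rev_image_eqI[of "j - 1"]) auto
    qed
  next
    case False
    then have ij: "i + 2 \<le> j" "j < length xs"
      using j by auto
    then consider "adj (xs ! i) (xs ! j)" | "Suc j < length xs" "adj (xs ! Suc i) (xs ! Suc j)"
      using optimal_ordering_step_forward[OF opt ij step] by blast
    then show ?thesis
    proof cases
      case 1
      then show ?thesis using ij by (intro UnI1 rev_image_eqI[of j]) auto
    next
      case 2
      then show ?thesis using ij by (intro UnI2 rev_image_eqI[of "Suc j"]) auto
    qed
  qed
qed

lemma optimal_ordering_length_le_twice_degree:
  assumes opt: "optimal_ordering adj V xs" and i: "Suc i < length xs"
    and step: "adj (xs ! i) (xs ! Suc i)"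
    and deg: "\<forall>v\<in>V. card {u\<in>V. adj v u} \<le> D"
  shows "length xs \<le> 2 * D"
proof -
  define n where "n = length xs"
  define A where "A = {k. k < n \<and> adj (xs ! i) (xs ! k)}"
  define C where "C = {k. k < n \<and> adj (xs ! Suc i) (xs ! k)}"
  have A: "Suc i \<in> A" "finite A" and C: "i \<in> C" "finite C"
    using i step sym by (auto simp: A_def C_def n_def)
  have deg_A: "card A \<le> D" and deg_C: "card C \<le> D"
    using optimal_orderingD(1,2)[OF opt] i deg
    by (auto simp: A_def C_def n_def card_nth_indices)
  have "n - 2 = card ({..<n} - {i, Suc i})"
    using i by (simp add: n_def card_Diff_subset)
  also have "\<dots> \<le> card ((\<lambda>k. if k < i then Suc k else k) ` (A - {Suc i}) \<union>
      (\<lambda>k. if k < i then k else k - 1) ` (C - {i}))"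
    using optimal_ordering_indices_cover[OF opt i step]
    by (intro card_mono) (auto simp: A_def C_def n_def)
  also have "\<dots> \<le> card (A - {Suc i}) + card (C - {i})"
    by (intro card_Un_le[THEN order_trans] add_mono card_image_le) (auto simp: A_def C_def)
  also have "\<dots> = (card A - 1) + (card C - 1)"
    using A C by simp
  finally have "n - 2 \<le> (card A - 1) + (card C - 1)" .
  moreover have "0 < card A"
    using A by (auto simp: card_gt_0_iff)
  ultimately show ?thesis
    using i deg_A deg_C unfolding n_def by linarith
qed

lemma optimal_ordering_four_vertices:
  assumes opt: "optimal_ordering adj V xs" and len: "length xs = 4"
    and deg: "\<forall>v\<in>V. card {u\<in>V. adj v u} \<le> 2"
  shows "adjacent_steps adj xs \<le> 1"
proof -
  obtain y0 y1 y2 y3 where xs: "xs = [y0, y1, y2, y3]"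
  proof
    show "xs = [xs ! 0, xs ! 1, xs ! 2, xs ! 3]"
      by (rule nth_equalityI) (auto simp: len less_Suc_eq numeral_eq_Suc nth_Cons split: nat.splits)
  qed
  have V: "y0 \<in> V" "y1 \<in> V" "y2 \<in> V" "y3 \<in> V"
    and distinct: "y0 \<noteq> y1" "y0 \<noteq> y2" "y0 \<noteq> y3" "y1 \<noteq> y2" "y1 \<noteq> y3" "y2 \<noteq> y3"
    using optimal_orderingD(1,2)[OF opt] xs by auto
  have not_three: "\<not> (adj v a \<and> adj v b \<and> adj v c)"
    if "v \<in> V" "a \<in> V" "b \<in> V" "c \<in> V" "a \<noteq> b" "a \<noteq> c" "b \<noteq> c" for v a b c
  proof
    assume "adj v a \<and> adj v b \<and> adj v c"
    then have "card {a, b, c} \<le> card {u\<in>V. adj v u}"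
      using that optimal_orderingD(2)[OF opt] by (intro card_mono) auto
    then show False
      using deg that by fastforce
  qed
  have "adj y0 y1 \<Longrightarrow> (adj y0 y2 \<or> adj y1 y3) \<and> adj y0 y3"
    using optimal_ordering_step_forward[OF opt, of 0 2] optimal_ordering_step_forward[OF opt, of 0 3]
    by (simp add: xs)
  moreover have "adj y1 y2 \<Longrightarrow> adj y1 y3 \<and> adj y0 y2"
    using optimal_ordering_step_forward[OF opt, of 1 3] optimal_ordering_step_backward[OF opt, of 0 1]
      sym[of y2 y0] by (simp add: xs)
  moreover have "adj y2 y3 \<Longrightarrow> adj y0 y3 \<and> (adj y1 y3 \<or> adj y0 y2)"
    using optimal_ordering_step_backward[OF opt, of 0 2] optimal_ordering_step_backward[OF opt, of 1 2]
      sym[of y3 y0] sym[of y3 y1] sym[of y2 y0] by (simp add: xs numeral_eq_Suc)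
  ultimately show ?thesis
    using not_three[OF V(1) V(2-4)] not_three[OF V(2) V(1) V(3-4)] not_three[OF V(3) V(1-2) V(4)]
      not_three[OF V(4) V(1-3)] distinct
      sym[of y1 y0] sym[of y2 y0] sym[of y3 y0] sym[of y2 y1] sym[of y3 y1] sym[of y3 y2]
    by (simp add: xs split: if_splits) blast
qed

lemma optimal_ordering_span_le_square_if_step:
  assumes opt: "optimal_ordering adj V xs" and i: "Suc i < length xs"
    and step: "adj (xs ! i) (xs ! Suc i)"
    and deg: "\<forall>v\<in>V. card {u\<in>V. adj v u} \<le> D" and "2 \<le> D"
    and steps: "adjacent_steps adj xs \<le> length xs - 2"
  shows "length xs - 1 + adjacent_steps adj xs \<le> D * D"
proof -
  have n: "length xs \<le> 2 * D"
    using optimal_ordering_length_le_twice_degree[OF opt i step deg] .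
  consider "D = 2" "length xs = 4" | "D = 2" "length xs \<noteq> 4" | "3 \<le> D"
    using \<open>2 \<le> D\<close> by linarith
  then show ?thesis
  proof cases
    case 1
    then have "adjacent_steps adj xs \<le> 1"
      using optimal_ordering_four_vertices[OF opt] deg by simp
    then show ?thesis
      using 1 by simp
  next
    case 2
    then show ?thesis
      using n steps by simp
  next
    case 3
    then obtain k where "D = k + 3"
      by (intro that[of "D - 3"]) simp
    then show ?thesis
      using n steps by (simp add: algebra_simps)
  qed
qed

end

lemma optimal_ordering_steps_le:
  assumes opt: "optimal_ordering adj V xs" and "finite V"
    and "u \<in> V" "v \<in> V" "u \<noteq> v" "\<not> adj u v"
  shows "adjacent_steps adj xs \<le> card V - 2"
proof -
  obtain rest where rest: "distinct rest" "set rest = V - {u, v}"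
    using finite_distinct_list[of "V - {u, v}"] \<open>finite V\<close> by auto
  then have "adjacent_steps adj xs \<le> adjacent_steps adj (u # v # rest)"
    using assms by (intro optimal_orderingD(3)[OF opt]) auto
  also have "\<dots> \<le> length rest"
    using \<open>\<not> adj u v\<close> adjacent_steps_le_length[of adj "v # rest"] by simp
  also have "\<dots> = card V - 2"
    using rest assms by (simp add: distinct_card[symmetric] card_Diff_subset)
  finally show ?thesis .
qed

lemma card_le_Moore_bound:
  fixes adj :: "'a \<Rightarrow> 'a \<Rightarrow> bool"
  assumes "finite V" and sym: "\<And>u w. adj u w \<longleftrightarrow> adj w u" and adj_V: "\<And>u w. adj u w \<Longrightarrow> w \<in> V"
    and deg: "\<forall>x\<in>V. card {u\<in>V. adj x u} \<le> D"
    and "v \<in> V" and reach: "\<forall>u\<in>V. v = u \<or> adj v u \<or> (\<exists>w. adj v w \<and> adj w u)"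
  shows "card V \<le> D * D + 1"
proof -
  define N where "N x = {u\<in>V. adj x u}" for x
  have fin: "finite (N x)" for x
    using \<open>finite V\<close> by (simp add: N_def)
  have "V \<subseteq> insert v (N v \<union> (\<Union>w\<in>N v. N w - {v}))"
    using reach adj_V by (auto simp: N_def)
  then have "card V \<le> card (insert v (N v \<union> (\<Union>w\<in>N v. N w - {v})))"
    using fin by (intro card_mono) auto
  also have "\<dots> \<le> Suc (card (N v \<union> (\<Union>w\<in>N v. N w - {v})))"
    by (rule card_insert_le_m1) auto
  also have "card (N v \<union> (\<Union>w\<in>N v. N w - {v})) \<le> card (N v) + card (\<Union>w\<in>N v. N w - {v})"
    by (rule card_Un_le)
  also have "card (\<Union>w\<in>N v. N w - {v}) \<le> (\<Sum>w\<in>N v. card (N w - {v}))"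
    using fin by (intro card_UN_le)
  also have "\<dots> \<le> (\<Sum>w\<in>N v. D - 1)"
  proof (rule sum_mono)
    fix w assume "w \<in> N v"
    then have "v \<in> N w" "w \<in> V"
      using \<open>v \<in> V\<close> sym by (auto simp: N_def)
    then show "card (N w - {v}) \<le> D - 1"
      using deg fin by (simp add: N_def diff_le_mono)
  qed
  also have "\<dots> = card (N v) * (D - 1)"
    by simp
  finally have "card V \<le> Suc (card (N v) + card (N v) * (D - 1))"
    by simp
  also have "\<dots> \<le> Suc (D + D * (D - 1))"
    using deg \<open>v \<in> V\<close> by (simp add: N_def add_mono mult_le_mono1)
  also have "D + D * (D - 1) = D * D"
    by (cases D) auto
  finally show ?thesis
    by simp
qed

lemma optimal_ordering_span_le_square:
  fixes adj :: "'a \<Rightarrow> 'a \<Rightarrow> bool"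
  assumes "finite V" and sym: "\<And>u w. adj u w \<longleftrightarrow> adj w u" and adj_V: "\<And>u w. adj u w \<Longrightarrow> w \<in> V"
    and deg: "\<forall>x\<in>V. card {u\<in>V. adj x u} \<le> D"
    and diam: "\<forall>x\<in>V. \<forall>y\<in>V. x = y \<or> adj x y \<or> (\<exists>w. adj x w \<and> adj w y)"
    and uv: "u \<in> V" "v \<in> V" "u \<noteq> v" "\<not> adj u v"
    and opt: "optimal_ordering adj V xs"
  shows "length xs - 1 + adjacent_steps adj xs \<le> D * D"
proof -
  obtain w where w: "adj u w" "adj w v"
    using diam uv by blast
  then have "card {u, v} \<le> card {x\<in>V. adj w x}"
    using uv sym \<open>finite V\<close> by (intro card_mono) auto
  moreover have "w \<in> V"
    using adj_V w by blast
  ultimately have "2 \<le> D"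
    using deg uv by fastforce
  have steps: "adjacent_steps adj xs \<le> length xs - 2"
    using optimal_ordering_steps_le[OF opt \<open>finite V\<close> uv] optimal_ordering_length[OF opt] by simp
  show ?thesis
  proof (cases "adjacent_steps adj xs = 0")
    case True
    have "\<forall>y\<in>V. u = y \<or> adj u y \<or> (\<exists>w. adj u w \<and> adj w y)"
      using diam uv(1) by blast
    with \<open>finite V\<close> sym adj_V deg uv(1) have "card V \<le> D * D + 1"
      by (rule card_le_Moore_bound)
    then show ?thesis
      using True optimal_ordering_length[OF opt] by simp
  next
    case False
    then obtain i where "Suc i < length xs" "adj (xs ! i) (xs ! Suc i)"
      using adjacent_steps_gt_0E[of adj xs] by auto
    then show ?thesis
      using optimal_ordering_span_le_square_if_step[OF sym opt _ _ deg \<open>2 \<le> D\<close> steps] by blast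
  qed
qed

definition step_label :: "('a \<Rightarrow> 'a \<Rightarrow> bool) \<Rightarrow> 'a list \<Rightarrow> nat \<Rightarrow> nat" where
  "step_label adj xs k = k + adjacent_steps adj (take (Suc k) xs)"

lemma step_label_Suc:
  "Suc k < length xs \<Longrightarrow>
    step_label adj xs (Suc k) = step_label adj xs k + (if adj (xs ! k) (xs ! Suc k) then 2 else 1)"
  by (simp add: step_label_def adjacent_steps_take_Suc)

lemma step_label_gap:
  assumes "k \<le> l" "l < length xs"
  shows "step_label adj xs k + (l - k) \<le> step_label adj xs l"
  using assms
proof (induction l)
  case (Suc l)
  then show ?case
    using step_label_Suc[of l xs adj] by (cases "k = Suc l") (auto simp: Suc_diff_le)
qed simp

lemma step_label_separated:
  assumes "k < l" "l < length xs"
  shows "step_label adj xs k < step_label adj xs l"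
    and "adj (xs ! k) (xs ! l) \<Longrightarrow> step_label adj xs k + 2 \<le> step_label adj xs l"
proof -
  have "step_label adj xs k + 1 \<le> step_label adj xs l \<and>
      (adj (xs ! k) (xs ! l) \<longrightarrow> step_label adj xs k + 2 \<le> step_label adj xs l)"
  proof (cases "l = Suc k")
    case True
    then show ?thesis using assms step_label_Suc[of k xs adj] by simp
  next
    case False
    then have "step_label adj xs k + 2 \<le> step_label adj xs l"
      using assms step_label_gap[of k l xs adj] by linarith
    then show ?thesis by simp
  qed
  then show "step_label adj xs k < step_label adj xs l"
    and "adj (xs ! k) (xs ! l) \<Longrightarrow> step_label adj xs k + 2 \<le> step_label adj xs l"
    by auto
qed

lemma obtain_fun_on_nth:
  assumes "distinct xs"
  obtains f where "\<And>k. k < length xs \<Longrightarrow> f (xs ! k) = g k"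
proof
  fix k assume "k < length xs"
  then show "(g \<circ> the_inv_into {..<length xs} ((!) xs)) (xs ! k) = g k"
    using assms by (simp add: the_inv_into_f_f inj_on_nth)
qed

lemma hadj_commute: "hadj E u v \<longleftrightarrow> hadj E v u"
  by (auto simp: hadj_def)

lemma hadj_in_vertices: "simple_hypergraph V E \<Longrightarrow> hadj E u v \<Longrightarrow> v \<in> V"
  by (auto simp: simple_hypergraph_def hadj_def)

lemma L21_colouring_if_inj_on:
  assumes "inj_on f V"
    and "\<And>u v. u \<in> V \<Longrightarrow> v \<in> V \<Longrightarrow> hadj E u v \<Longrightarrow> 2 \<le> \<bar>int (f u) - int (f v)\<bar>"
  shows "L21_colouring V E f"
  using assms by (auto simp: L21_colouring_def hadj_def inj_on_def)

context
  fixes E :: "'a set set" and xs :: "'a list" and f :: "'a \<Rightarrow> nat"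
  assumes distinct: "distinct xs"
    and f_nth: "\<And>k. k < length xs \<Longrightarrow> f (xs ! k) = step_label (hadj E) xs k"
begin

lemma L21_colouring_step_label: "L21_colouring (set xs) E f"
proof (rule L21_colouring_if_inj_on)
  have less: "f (xs ! k) < f (xs ! l)" if "k < l" "l < length xs" for k l
    using step_label_separated(1)[OF that] f_nth[of k] f_nth[of l] that by simp
  then show "inj_on f (set xs)"
    by (auto simp: inj_on_def in_set_conv_nth) (metis less_irrefl linorder_neqE_nat)
  have gap: "2 \<le> \<bar>int (f (xs ! k)) - int (f (xs ! l))\<bar>"
    if "k < l" "l < length xs" "hadj E (xs ! k) (xs ! l)" for k l
    using step_label_separated(2)[where adj = "hadj E", OF that] f_nth[of k] f_nth[of l] that(1,2) by simp
  fix u v assume "u \<in> set xs" "v \<in> set xs" "hadj E u v"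
  then show "2 \<le> \<bar>int (f u) - int (f v)\<bar>"
    using gap hadj_commute by (auto simp: in_set_conv_nth hadj_def) (metis abs_minus_commute linorder_neqE_nat)
qed

lemma span_step_label:
  assumes "xs \<noteq> []"
  shows "span (set xs) f = length xs - 1 + adjacent_steps (hadj E) xs"
proof -
  let ?lab = "step_label (hadj E) xs" and ?last = "length xs - 1"
  have image: "f ` set xs = ?lab ` {..<length xs}"
    by (force simp: in_set_conv_nth f_nth image_iff)
  have "?lab k \<le> ?lab ?last" "?lab 0 \<le> ?lab k" if "k < length xs" for k
    using that step_label_gap[of k ?last xs "hadj E"] step_label_gap[of 0 k xs "hadj E"] by linarith+
  then have "Max (?lab ` {..<length xs}) = ?lab ?last" "Min (?lab ` {..<length xs}) = ?lab 0"
    using assms by (auto intro!: Max_eqI Min_eqI)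
  moreover have "?lab 0 = 0"
    using assms by (cases xs) (simp_all add: step_label_def)
  ultimately show ?thesis
    using assms by (simp add: span_def image step_label_def)
qed

end

lemma card_hadj_neighbours_le:
  assumes "simple_hypergraph V E" and "uniform r E" and "v \<in> V"
  shows "card {u\<in>V. hadj E v u} \<le> (r - 1) * max_degree V E"
proof -
  have "finite V" and E_V: "\<forall>e\<in>E. e \<subseteq> V"
    using assms(1) by (auto simp: simple_hypergraph_def)
  then have "finite E"
    by (meson Pow_iff finite_Pow_iff rev_finite_subset subsetI)
  let ?I = "{e\<in>E. v \<in> e}"
  have "card {u\<in>V. hadj E v u} \<le> card (\<Union>e\<in>?I. e - {v})"
    using \<open>finite E\<close> E_V \<open>finite V\<close> by (intro card_mono) (auto simp: hadj_def intro: finite_subset)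
  also have "\<dots> \<le> (\<Sum>e\<in>?I. card (e - {v}))"
    using \<open>finite E\<close> by (intro card_UN_le) simp
  also have "\<dots> = (\<Sum>e\<in>?I. r - 1)"
    using assms(2) E_V \<open>finite V\<close> by (intro sum.cong) (auto simp: uniform_def intro: finite_subset)
  also have "\<dots> = degree E v * (r - 1)"
    by (simp add: degree_def)
  also have "\<dots> \<le> max_degree V E * (r - 1)"
    using \<open>finite V\<close> \<open>v \<in> V\<close> by (auto simp: max_degree_def)
  finally show ?thesis
    by (simp add: mult.commute)
qed

lemma walk_le_2_iff: "walk_le E 2 u v \<longleftrightarrow> u = v \<or> hadj E u v \<or> (\<exists>w. hadj E u w \<and> hadj E w v)"
  by (auto simp: numeral_2_eq_2)

theorem mainTheorem9:
  fixes V :: "'a set" and E :: "'a set set" and r :: nat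
  assumes "simple_hypergraph V E"
    and "uniform r E"
    and "diameter_two V E"
  shows "lambda21 V E \<le> ((r - 1) * max_degree V E) ^ 2"
proof -
  have "finite V"
    using assms(1) by (simp add: simple_hypergraph_def)
  have deg: "\<forall>x\<in>V. card {y\<in>V. hadj E x y} \<le> (r - 1) * max_degree V E"
    using card_hadj_neighbours_le[OF assms(1,2)] by blast
  obtain u v where uv: "u \<in> V" "v \<in> V" "u \<noteq> v" "\<not> hadj E u v"
    and diam: "\<forall>x\<in>V. \<forall>y\<in>V. x = y \<or> hadj E x y \<or> (\<exists>w. hadj E x w \<and> hadj E w y)"
    using assms(3) by (auto simp: diameter_two_def walk_le_2_iff)
  obtain xs where opt: "optimal_ordering (hadj E) V xs"
    using optimal_ordering_exists[OF \<open>finite V\<close>] .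
  have xs: "distinct xs" "set xs = V" "xs \<noteq> []"
    using optimal_orderingD(1,2)[OF opt] uv(1) by auto
  obtain f where f: "\<And>k. k < length xs \<Longrightarrow> f (xs ! k) = step_label (hadj E) xs k"
    using obtain_fun_on_nth[OF xs(1), of "step_label (hadj E) xs"] by blast
  have "lambda21 V E \<le> span V f"
    unfolding lambda21_def using L21_colouring_step_label[OF xs(1) f] xs(2)
    by (intro Least_le) auto
  also have "\<dots> = length xs - 1 + adjacent_steps (hadj E) xs"
    using span_step_label[OF xs(1) f xs(3)] xs(2) by simp
  also have "\<dots> \<le> ((r - 1) * max_degree V E) * ((r - 1) * max_degree V E)"
    by (rule optimal_ordering_span_le_square[OF \<open>finite V\<close> hadj_commute
          hadj_in_vertices[OF assms(1)] deg diam uv opt])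
  finally show ?thesis
    by (simp add: power2_eq_square)
qed

end
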